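(* Let $\Theta=\{\Theta_\omega\in B(\mathcal H,\mathcal K_\omega):\omega\in\Omega\}$ be a continuous $g$-frame for $\mathcal H$ with dual $\Lambda=\{\Lambda_\omega\in B(\mathcal H,\mathcal K_\omega):\omega\in\Omega\}$, and let $\Phi=\{\Phi_\omega\in B(\mathcal K,\mathcal K_\omega):\omega\in\Omega\}$ be a continuous $g$-frame for $\mathcal K$ with dual $\Psi=\{\Psi_\omega\in B(\mathcal K,\mathcal K_\omega):\omega\in\Omega\}$. Suppose $\Lambda$ and $\Phi$ are strongly disjoint, and $\Theta$ and $\Psi$ are strongly disjoint. Define $\Gamma_\omega,\Delta_\omega\in B(\mathcal H\oplus\mathcal K,\mathcal K_\omega)$ by $\Gamma_\omega(h\oplus k)=\Lambda_\omega h+\Psi_\omega k$ and $\Delta_\omega(h\oplus k)=\Theta_\omega h+\Phi_\omega k$. Then $\Gamma=\{\Gamma_\omega\}$ and $\Delta=\{\Delta_\omega\}$ are dual continuous $g$-frames for $\mathcal H\oplus\mathcal K$.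
   Context: $\mathcal H,\mathcal K$ are complex Hilbert spaces, $(\Omega,\mu)$ a measure space with positive measure $\mu$, and $\{\mathcal K_\omega:\omega\in\Omega\}$ a family of complex Hilbert spaces. A map $F$ on $\Omega$ with $F(\omega)\in\mathcal K_\omega$ is strongly measurable if it is measurable as a map $\Omega\to\bigoplus_\omega\mathcal K_\omega$; $\widehat{\mathcal K}$ is the Hilbert space of strongly measurable such $F$ with $\int_\Omega\|F(\omega)\|^2d\mu<\infty$, inner product $\langle F,G\rangle=\int_\Omega\langle F(\omega),G(\omega)\rangle d\mu$. For a Hilbert space $\mathcal V$, a family $\Lambda=\{\Lambda_\omega\in B(\mathcal V,\mathcal K_\omega)\}$ is a continuous $g$-frame for $\mathcal V$ if $\omega\mapsto\Lambda_\omega f$ is strongly measurable for each $f$ and there are $0<A\le B<\infty$ with $A\|f\|^2\le\int_\Omega\|\Lambda_\omega f\|^2d\mu(\omega)\le B\|f\|^2$ for all $f\in\mathcal V$. Its analysis operator $T_\Lambda^*:\mathcal V\to\widehat{\mathcal K}$ is $(T_\Lambda^*f)(\omega)=\Lambda_\omega f$. Two continuous $g$-frames $\Lambda,\Theta$ (possibly on different spaces, same $\{\mathcal K_\omega\}$) are strongly disjoint if $\mathrm{Range}\,T_\Lambda^*\perp\mathrm{Range}\,T_\Theta^*$ in $\widehat{\mathcal K}$. Continuous $g$-frames $\Lambda,\Theta$ for $\mathcal V$ are dual (i.e. $\Theta$ is a dual of $\Lambda$) if $\langle f,g\rangle=\int_\Omega\langle f,\Theta_\omega^*\Lambda_\omega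 g\rangle d\mu(\omega)$ for all $f,g\in\mathcal V$. *)

theory Defs
  imports "HOL-Analysis.Analysis"
begin

text \<open>The distribution has no complex vector spaces, so we introduce them.
  Convention: the inner product is linear in the first argument and
  conjugate-linear in the second.\<close>

class complex_vector = real_vector +
  fixes scaleC :: "complex \<Rightarrow> 'a \<Rightarrow> 'a" (infixr \<open>*\<^sub>C\<close> 75)
  assumes scaleC_add_right: "a *\<^sub>C (x + y) = a *\<^sub>C x + a *\<^sub>C y"
    and scaleC_add_left: "(a + b) *\<^sub>C x = a *\<^sub>C x + b *\<^sub>C x"
    and scaleC_scaleC: "a *\<^sub>C (b *\<^sub>C x) = (a * b) *\<^sub>C x"
    and scaleC_one: "1 *\<^sub>C x = x"
    and scaleC_of_real: "complex_of_real r *\<^sub>C x = r *\<^sub>R x"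

class complex_inner = complex_vector + real_normed_vector +
  fixes cinner :: "'a \<Rightarrow> 'a \<Rightarrow> complex"
  assumes cinner_commute: "cinner x y = cnj (cinner y x)"
    and cinner_add_left: "cinner (x + y) z = cinner x z + cinner y z"
    and cinner_scaleC_left: "cinner (r *\<^sub>C x) y = r * cinner x y"
    and cinner_ge_zero: "0 \<le> Re (cinner x x)"
    and cinner_eq_zero_iff: "cinner x x = 0 \<longleftrightarrow> x = 0"
    and norm_eq_sqrt_cinner: "norm x = sqrt (Re (cinner x x))"

class chilbert_space = complex_inner + complete_space

instantiation prod :: (complex_vector, complex_vector) complex_vector
begin
definition scaleC_prod_def: "c *\<^sub>C x = (c *\<^sub>C fst x, c *\<^sub>C snd x)"
instance
  by standard (auto simp: scaleC_prod_def scaleC_add_right scaleC_add_left scaleC_scaleC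
      scaleC_one scaleC_of_real prod_eq_iff)
end

instantiation prod :: (complex_inner, complex_inner) complex_inner
begin
definition cinner_prod_def: "cinner x y = cinner (fst x) (fst y) + cinner (snd x) (snd y)"
instance
proof
  fix x y z :: "'a \<times> 'b" and r :: complex
  show "cinner x y = cnj (cinner y x)"
    by (simp add: cinner_prod_def cinner_commute[of "fst x"] cinner_commute[of "snd x"])
  show "cinner (x + y) z = cinner x z + cinner y z"
    by (simp add: cinner_prod_def cinner_add_left)
  show "cinner (r *\<^sub>C x) y = r * cinner x y"
    by (simp add: cinner_prod_def scaleC_prod_def cinner_scaleC_left algebra_simps)
  show "0 \<le> Re (cinner x x)"
    using cinner_ge_zero[of "fst x"] cinner_ge_zero[of "snd x"] by (simp add: cinner_prod_def)
  have a: "Re (cinner (fst x) (fst x)) = (norm (fst x))\<^sup>2"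
    using cinner_ge_zero[of "fst x"] by (simp add: norm_eq_sqrt_cinner)
  have b: "Re (cinner (snd x) (snd x)) = (norm (snd x))\<^sup>2"
    using cinner_ge_zero[of "snd x"] by (simp add: norm_eq_sqrt_cinner)
  show "norm x = sqrt (Re (cinner x x))"
    by (simp add: cinner_prod_def norm_prod_def a b)
  have ia: "Im (cinner (fst x) (fst x)) = 0"
    using cinner_commute[of "fst x" "fst x"] by (metis cnj.sel(2) neg_equal_zero)
  have ib: "Im (cinner (snd x) (snd x)) = 0"
    using cinner_commute[of "snd x" "snd x"] by (metis cnj.sel(2) neg_equal_zero)
  show "cinner x x = 0 \<longleftrightarrow> x = 0"
  proof
    assume "cinner x x = 0"
    then have "Re (cinner (fst x) (fst x)) + Re (cinner (snd x) (snd x)) = 0"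
      by (metis cinner_prod_def plus_complex.sel(1) zero_complex.sel(1))
    then have "Re (cinner (fst x) (fst x)) = 0 \<and> Re (cinner (snd x) (snd x)) = 0"
      using cinner_ge_zero[of "fst x"] cinner_ge_zero[of "snd x"] by linarith
    then have "cinner (fst x) (fst x) = 0 \<and> cinner (snd x) (snd x) = 0"
      using ia ib complex_eqI by auto
    then show "x = 0" by (simp add: cinner_eq_zero_iff prod_eq_iff)
  next
    assume "x = 0"
    then show "cinner x x = 0"
      using cinner_eq_zero_iff[of "0::'a"] cinner_eq_zero_iff[of "0::'b"]
      by (simp add: cinner_prod_def)
  qed
qed
end

instance prod :: (chilbert_space, chilbert_space) chilbert_space ..

definition bounded_clinear :: "('a::complex_inner \<Rightarrow> 'b::complex_inner) \<Rightarrow> bool" where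
  "bounded_clinear T \<longleftrightarrow>
     (bounded_linear T \<and> (\<forall>c x. T (c *\<^sub>C x) = c *\<^sub>C T x))"

definition closed_csubspace :: "'a::complex_inner set \<Rightarrow> bool" where
  "closed_csubspace S \<longleftrightarrow> closed S \<and> 0 \<in> S \<and> (\<forall>x\<in>S. \<forall>y\<in>S. x + y \<in> S)
     \<and> (\<forall>c. \<forall>x\<in>S. c *\<^sub>C x \<in> S)"

text \<open>Strong (Bochner) measurability, in Pettis form: Borel measurable and
  separably valued.\<close>
definition strongly_measurable :: "'w measure \<Rightarrow> ('w \<Rightarrow> 'k::complex_inner) \<Rightarrow> bool" where
  "strongly_measurable M F \<longleftrightarrow>
     F \<in> borel_measurable M \<and> (\<exists>D. countable D \<and> F ` space M \<subseteq> closure D)"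

text \<open>The family of spaces K \<omega> is modelled by closed subspaces of one
  ambient Hilbert space 'k. cg_frame M K \<Lambda>: \<Lambda> is a
  continuous g-frame for the whole space 'v w.r.t. {K \<omega>}.\<close>
definition cg_frame ::
  "'w measure \<Rightarrow> ('w \<Rightarrow> 'k::chilbert_space set) \<Rightarrow> ('w \<Rightarrow> 'v::chilbert_space \<Rightarrow> 'k) \<Rightarrow> bool" where
  "cg_frame M K \<Lambda> \<longleftrightarrow>
     (\<forall>\<omega>\<in>space M. bounded_clinear (\<Lambda> \<omega>) \<and> range (\<Lambda> \<omega>) \<subseteq> K \<omega>) \<and>
     (\<forall>f. strongly_measurable M (\<lambda>\<omega>. \<Lambda> \<omega> f)) \<and>
     (\<exists>A B. 0 < A \<and> A \<le> B \<and>
        (\<forall>f. ennreal (A * (norm f)\<^sup>2) \<le> (\<integral>\<^sup>+\<omega>. ennreal ((norm (\<Lambda> \<omega> f))\<^sup>2) \<partial>M) \<and>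
             (\<integral>\<^sup>+\<omega>. ennreal ((norm (\<Lambda> \<omega> f))\<^sup>2) \<partial>M) \<le> ennreal (B * (norm f)\<^sup>2)))"

text \<open>Range of the analysis operator of \<Lambda> is orthogonal in the space of
  square integrable sections to the range of that of \<Theta>.\<close>
definition strongly_disjoint ::
  "'w measure \<Rightarrow> ('w \<Rightarrow> 'k::chilbert_space set) \<Rightarrow> ('w \<Rightarrow> 'v::chilbert_space \<Rightarrow> 'k)
     \<Rightarrow> ('w \<Rightarrow> 'u::chilbert_space \<Rightarrow> 'k) \<Rightarrow> bool" where
  "strongly_disjoint M K \<Lambda> \<Theta> \<longleftrightarrow> cg_frame M K \<Lambda> \<and> cg_frame M K \<Theta> \<and>
     (\<forall>f g. (\<integral>\<omega>. cinner (\<Lambda> \<omega> f) (\<Theta> \<omega> g) \<partial>M) = 0)"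

definition cg_dual_of ::
  "'w measure \<Rightarrow> ('w \<Rightarrow> 'k::chilbert_space set) \<Rightarrow> ('w \<Rightarrow> 'v::chilbert_space \<Rightarrow> 'k)
     \<Rightarrow> ('w \<Rightarrow> 'v \<Rightarrow> 'k) \<Rightarrow> bool" where
  "cg_dual_of M K \<Theta> \<Lambda> \<longleftrightarrow> cg_frame M K \<Theta> \<and> cg_frame M K \<Lambda> \<and>
     (\<forall>f g. cinner f g = (\<integral>\<omega>. cinner (\<Theta> \<omega> f) (\<Lambda> \<omega> g) \<partial>M))"

end

theory Submission
  imports Defs
begin

text \<open>Expanding \<open>\<langle>\<Gamma>\<^sub>\<omega> p, \<Delta>\<^sub>\<omega> q\<rangle>\<close> gives four terms: the two duality relations
  integrate the diagonal ones to \<open>\<langle>fst p, fst q\<rangle> + \<langle>snd p, snd q\<rangle> = \<langle>p, q\<rangle>\<close>, and strong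
  disjointness makes the cross terms integrate to zero, so \<open>\<Gamma>\<close> and \<open>\<Delta>\<close> are dual.
  Both inherit upper frame bounds from their summands. Lower bounds come from duality
  alone: \<open>\<parallel>p\<parallel>\<^sup>2 = \<integral>\<langle>\<Gamma>\<^sub>\<omega> p, \<Delta>\<^sub>\<omega> p\<rangle> \<le> \<integral>\<parallel>\<Gamma>\<^sub>\<omega> p\<parallel> \<parallel>\<Delta>\<^sub>\<omega> p\<parallel>\<close>, and AM-GM weighted by the
  upper bound \<open>B\<close> of one family bounds the other one below by \<open>\<parallel>p\<parallel>\<^sup>2 / B\<close>.\<close>

lemma cinner_zero_left [simp]: "cinner 0 (y::'a::complex_inner) = 0"
  using cinner_add_left[of "0::'a" 0 y] by simp

lemma cinner_minus_left: "cinner (- x) (y::'a::complex_inner) = - cinner x y"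
  using cinner_add_left[of x "-x" y] by (simp add: eq_neg_iff_add_eq_0 add.commute)

lemma cinner_diff_left: "cinner (x - z) (y::'a::complex_inner) = cinner x y - cinner z y"
  using cinner_add_left[of x "-z" y] by (simp add: cinner_minus_left)

lemma cinner_add_right: "cinner x (y + z::'a::complex_inner) = cinner x y + cinner x z"
  by (metis cinner_add_left cinner_commute complex_cnj_add)

lemma cinner_diff_right: "cinner x (y - z::'a::complex_inner) = cinner x y - cinner x z"
  by (metis cinner_diff_left cinner_commute complex_cnj_diff)

lemma cinner_scaleC_right: "cinner x (c *\<^sub>C y::'a::complex_inner) = cnj c * cinner x y"
  by (metis cinner_commute cinner_scaleC_left complex_cnj_mult)

lemma cinner_scaleR_left: "cinner (r *\<^sub>R x) (y::'a::complex_inner) = r *\<^sub>R cinner x y"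
  by (metis cinner_scaleC_left scaleC_of_real scaleR_conv_of_real)

lemma cinner_scaleR_right: "cinner x (r *\<^sub>R y::'a::complex_inner) = r *\<^sub>R cinner x y"
  by (metis cinner_scaleC_right scaleC_of_real scaleR_conv_of_real complex_cnj_complex_of_real)

lemma cinner_self_eq_norm_power2: "cinner x (x::'a::complex_inner) = complex_of_real ((norm x)\<^sup>2)"
proof -
  have "Im (cinner x x) = 0"
    using cinner_commute[of x x] by (metis cnj.sel(2) neg_equal_zero)
  moreover have "Re (cinner x x) = (norm x)\<^sup>2"
    using cinner_ge_zero[of x] by (simp add: norm_eq_sqrt_cinner)
  ultimately show ?thesis by (simp add: complex_eq_iff)
qed

lemma norm_cinner_le: "norm (cinner x (y::'a::complex_inner)) \<le> norm x * norm y"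
proof (cases "y = 0")
  case True
  then show ?thesis using cinner_commute[of x y] by simp
next
  case False
  define a where "a = cinner x y"
  define b where "b = (norm y)\<^sup>2"
  define t where "t = a / of_real b"
  have b_pos: "b > 0" using False by (simp add: b_def)
  have yy: "cinner y y = of_real b" by (simp add: b_def cinner_self_eq_norm_power2)
  have yx: "cinner y x = cnj a" by (simp add: a_def cinner_commute[of y x])
  have "cinner (x - t *\<^sub>C y) (x - t *\<^sub>C y) =
      cinner x x - t * cnj a - cnj t * a + t * cnj t * of_real b"
    by (simp add: cinner_diff_left cinner_diff_right cinner_scaleC_left cinner_scaleC_right
        yy yx a_def[symmetric] algebra_simps)
  also have "\<dots> = cinner x x - a * cnj a / of_real b"
    using b_pos by (simp add: t_def field_simps)
  also have "\<dots> = of_real ((norm x)\<^sup>2 - (cmod a)\<^sup>2 / b)"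
    by (simp add: cinner_self_eq_norm_power2 complex_norm_square[symmetric])
  finally have "0 \<le> (norm x)\<^sup>2 - (cmod a)\<^sup>2 / b"
    using cinner_ge_zero[of "x - t *\<^sub>C y"] by simp
  then have "(cmod a)\<^sup>2 \<le> (norm x * norm y)\<^sup>2"
    using b_pos by (simp add: b_def field_simps power_mult_distrib)
  then show ?thesis unfolding a_def by (simp add: power2_le_iff_abs_le)
qed

lemma bounded_bilinear_cinner: "bounded_bilinear (cinner :: 'a::complex_inner \<Rightarrow> 'a \<Rightarrow> complex)"
proof (rule bounded_bilinear.intro)
  show "\<exists>K. \<forall>x y::'a. norm (cinner x y) \<le> norm x * norm y * K"
    using norm_cinner_le by (intro exI[of _ 1]) auto
qed (simp_all add: cinner_add_left cinner_add_right cinner_scaleR_left cinner_scaleR_right)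

lemma continuous_on_cinner:
  "continuous_on UNIV (\<lambda>p::'a::complex_inner \<times> 'a. cinner (fst p) (snd p))"
  by (intro continuous_at_imp_continuous_on ballI bounded_bilinear.continuous[OF bounded_bilinear_cinner]
      continuous_fst continuous_snd continuous_ident)

section \<open>Strongly measurable sections\<close>

lemma open_Times_separable_ball_cover:
  fixes a :: "'a::metric_space" and b :: "'b::metric_space"
  assumes "open U" "(a, b) \<in> U" "a \<in> closure D1" "b \<in> closure D2"
  obtains d1 d2 r where "d1 \<in> D1" "d2 \<in> D2" "r \<in> \<rat>" "0 < r"
    "dist d1 a < r" "dist d2 b < r" "ball d1 r \<times> ball d2 r \<subseteq> U"
proof -
  obtain P Q where PQ: "open P" "open Q" "a \<in> P" "b \<in> Q" "P \<times> Q \<subseteq> U"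
    using open_prod_elim[OF assms(1,2)] by (metis mem_Sigma_iff)
  obtain e1 where e1: "e1 > 0" "ball a e1 \<subseteq> P" using PQ openE by metis
  obtain e2 where e2: "e2 > 0" "ball b e2 \<subseteq> Q" using PQ openE by metis
  obtain r where r: "r \<in> \<rat>" "0 < r" "r < min e1 e2 / 2"
    using Rats_dense_in_real[of 0 "min e1 e2 / 2"] e1 e2 by auto
  obtain d1 where d1: "d1 \<in> D1" "dist d1 a < r" using assms(3) r closure_approachable by metis
  obtain d2 where d2: "d2 \<in> D2" "dist d2 b < r" using assms(4) r closure_approachable by metis
  have "ball d1 r \<subseteq> ball a e1"
  proof
    fix z assume "z \<in> ball d1 r"
    then show "z \<in> ball a e1" using dist_triangle[of a z d1] d1 r by (auto simp: dist_commute)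
  qed
  moreover have "ball d2 r \<subseteq> ball b e2"
  proof
    fix z assume "z \<in> ball d2 r"
    then show "z \<in> ball b e2" using dist_triangle[of b z d2] d2 r by (auto simp: dist_commute)
  qed
  ultimately have "ball d1 r \<times> ball d2 r \<subseteq> U" using e1(2) e2(2) PQ(5) by blast
  with d1 d2 r show thesis using that by blast
qed

text \<open>Without second countability the Borel sets of a product need not be generated by
  rectangles; separable ranges restore this.\<close>

lemma borel_measurable_Pair_separable:
  fixes F :: "'w \<Rightarrow> 'a::metric_space" and G :: "'w \<Rightarrow> 'b::metric_space"
  assumes "F \<in> borel_measurable M" "G \<in> borel_measurable M"
    and "countable D1" "countable D2"
    and FD: "F ` space M \<subseteq> closure D1" and GD: "G ` space M \<subseteq> closure D2"
  shows "(\<lambda>\<omega>. (F \<omega>, G \<omega>)) \<in> borel_measurable M"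
proof (rule borel_measurableI)
  fix U :: "('a \<times> 'b) set" assume U: "open U"
  define I where "I = {(d1, d2, r). d1 \<in> D1 \<and> d2 \<in> D2 \<and> r \<in> \<rat> \<and> ball d1 r \<times> ball d2 r \<subseteq> U}"
  define A where "A = (\<lambda>(d1, d2, r). (F -` ball d1 r \<inter> space M) \<inter> (G -` ball d2 r \<inter> space M))"
  have "countable I"
    by (rule countable_subset[of _ "D1 \<times> D2 \<times> \<rat>"]) (use assms countable_rat in \<open>auto simp: I_def\<close>)
  moreover have "(\<lambda>\<omega>. (F \<omega>, G \<omega>)) -` U \<inter> space M = \<Union> (A ` I)"
  proof (intro equalityI subsetI)
    fix \<omega> assume "\<omega> \<in> (\<lambda>\<omega>. (F \<omega>, G \<omega>)) -` U \<inter> space M"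
    then obtain d1 d2 r where "d1 \<in> D1" "d2 \<in> D2" "r \<in> \<rat>" "0 < r" "dist d1 (F \<omega>) < r"
        "dist d2 (G \<omega>) < r" "ball d1 r \<times> ball d2 r \<subseteq> U" "\<omega> \<in> space M"
      using open_Times_separable_ball_cover[OF U, of "F \<omega>" "G \<omega>" D1 D2] FD GD by blast
    then show "\<omega> \<in> \<Union> (A ` I)" by (auto simp: A_def I_def intro!: bexI[of _ "(d1, d2, r)"])
  qed (auto simp: A_def I_def)
  moreover have "A i \<in> sets M" for i
    by (cases i) (auto simp: A_def intro!: sets.Int measurable_sets[OF assms(1)] measurable_sets[OF assms(2)])
  ultimately show "(\<lambda>\<omega>. (F \<omega>, G \<omega>)) -` U \<inter> space M \<in> sets M"
    by (metis sets.countable_UN'')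
qed

lemma strongly_measurable_Pair:
  assumes "strongly_measurable M F" "strongly_measurable M G"
  obtains D1 D2 where "countable D1" "countable D2"
    "(\<lambda>\<omega>. (F \<omega>, G \<omega>)) ` space M \<subseteq> closure (D1 \<times> D2)"
    "(\<lambda>\<omega>. (F \<omega>, G \<omega>)) \<in> borel_measurable M"
proof -
  obtain D1 D2 where "countable D1" "F ` space M \<subseteq> closure D1"
      "countable D2" "G ` space M \<subseteq> closure D2"
    using assms by (auto simp: strongly_measurable_def)
  moreover from this have "(\<lambda>\<omega>. (F \<omega>, G \<omega>)) \<in> borel_measurable M"
    using assms by (intro borel_measurable_Pair_separable) (auto simp: strongly_measurable_def)
  moreover from calculation have "(\<lambda>\<omega>. (F \<omega>, G \<omega>)) ` space M \<subseteq> closure (D1 \<times> D2)"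
    by (auto simp: closure_Times)
  ultimately show thesis using that by blast
qed

lemma strongly_measurable_add:
  fixes F G :: "'w \<Rightarrow> 'k::complex_inner"
  assumes "strongly_measurable M F" "strongly_measurable M G"
  shows "strongly_measurable M (\<lambda>\<omega>. F \<omega> + G \<omega>)"
proof -
  obtain D1 D2 where D: "countable D1" "countable D2"
      and range: "(\<lambda>\<omega>. (F \<omega>, G \<omega>)) ` space M \<subseteq> closure (D1 \<times> D2)"
      and meas: "(\<lambda>\<omega>. (F \<omega>, G \<omega>)) \<in> borel_measurable M"
    using strongly_measurable_Pair[OF assms] by metis
  have plus_cont: "continuous_on UNIV (\<lambda>p. fst p + snd p :: 'k)"
    by (intro continuous_intros)
  have "(\<lambda>p. fst p + snd p) ` closure (D1 \<times> D2) \<subseteq> closure ((\<lambda>p. fst p + snd p) ` (D1 \<times> D2))"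
    by (rule image_closure_subset[OF continuous_on_subset[OF plus_cont] closed_closure closure_subset]) simp
  then have "(\<lambda>\<omega>. F \<omega> + G \<omega>) ` space M \<subseteq> closure ((\<lambda>p. fst p + snd p) ` (D1 \<times> D2))"
    using range by fastforce
  moreover have "countable ((\<lambda>p. fst p + snd p) ` (D1 \<times> D2))" using D by blast
  ultimately show ?thesis
    using borel_measurable_continuous_on[OF plus_cont meas]
    by (auto simp: strongly_measurable_def)
qed

lemma borel_measurable_cinner_strongly:
  assumes "strongly_measurable M F" "strongly_measurable M G"
  shows "(\<lambda>\<omega>. cinner (F \<omega>) (G \<omega>)) \<in> borel_measurable M"
proof -
  obtain D1 D2 where "(\<lambda>\<omega>. (F \<omega>, G \<omega>)) \<in> borel_measurable M"
    using strongly_measurable_Pair[OF assms] by metis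
  from borel_measurable_continuous_on[OF continuous_on_cinner this] show ?thesis by simp
qed

lemma borel_measurable_norm_power2_strongly:
  assumes "strongly_measurable M F"
  shows "(\<lambda>\<omega>. (norm (F \<omega>))\<^sup>2) \<in> borel_measurable M"
  using assms by (auto simp: strongly_measurable_def)

definition cg_bessel :: "'w measure \<Rightarrow> ('w \<Rightarrow> 'v::complex_inner \<Rightarrow> 'k::complex_inner) \<Rightarrow> real \<Rightarrow> bool"
  where "cg_bessel M \<Lambda> B \<longleftrightarrow> 0 < B \<and>
    (\<forall>f. strongly_measurable M (\<lambda>\<omega>. \<Lambda> \<omega> f) \<and> integrable M (\<lambda>\<omega>. (norm (\<Lambda> \<omega> f))\<^sup>2) \<and>
         (\<integral>\<omega>. (norm (\<Lambda> \<omega> f))\<^sup>2 \<partial>M) \<le> B * (norm f)\<^sup>2)"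

lemma cg_frame_imp_bessel:
  assumes "cg_frame M K \<Lambda>"
  obtains B where "cg_bessel M \<Lambda> B"
proof -
  obtain A B where AB: "0 < A" "A \<le> B"
    "\<And>f. (\<integral>\<^sup>+\<omega>. ennreal ((norm (\<Lambda> \<omega> f))\<^sup>2) \<partial>M) \<le> ennreal (B * (norm f)\<^sup>2)"
    and meas: "\<And>f. strongly_measurable M (\<lambda>\<omega>. \<Lambda> \<omega> f)"
    using assms unfolding cg_frame_def by blast
  have "integrable M (\<lambda>\<omega>. (norm (\<Lambda> \<omega> f))\<^sup>2) \<and> (\<integral>\<omega>. (norm (\<Lambda> \<omega> f))\<^sup>2 \<partial>M) \<le> B * (norm f)\<^sup>2"
    for f
  proof
    have "(\<integral>\<^sup>+\<omega>. ennreal (norm ((norm (\<Lambda> \<omega> f))\<^sup>2)) \<partial>M) < \<infinity>"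
      using AB(3)[of f] by (simp add: le_less_trans)
    then show int: "integrable M (\<lambda>\<omega>. (norm (\<Lambda> \<omega> f))\<^sup>2)"
      by (intro integrableI_bounded borel_measurable_norm_power2_strongly meas)
    have "ennreal (\<integral>\<omega>. (norm (\<Lambda> \<omega> f))\<^sup>2 \<partial>M) \<le> ennreal (B * (norm f)\<^sup>2)"
      using AB(3)[of f] by (subst nn_integral_eq_integral[OF int, symmetric]) auto
    then show "(\<integral>\<omega>. (norm (\<Lambda> \<omega> f))\<^sup>2 \<partial>M) \<le> B * (norm f)\<^sup>2"
      using AB by (simp add: ennreal_le_iff)
  qed
  with AB meas show thesis by (intro that[of B]) (simp add: cg_bessel_def)
qed

lemma cg_frameI_bessel:
  fixes \<Lambda> :: "'w \<Rightarrow> 'v::chilbert_space \<Rightarrow> 'k::chilbert_space"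
  assumes "\<forall>\<omega>\<in>space M. bounded_clinear (\<Lambda> \<omega>) \<and> range (\<Lambda> \<omega>) \<subseteq> K \<omega>"
    and "cg_bessel M \<Lambda> B" "0 < A"
    and lower: "\<And>f. A * (norm f)\<^sup>2 \<le> (\<integral>\<omega>. (norm (\<Lambda> \<omega> f))\<^sup>2 \<partial>M)"
  shows "cg_frame M K \<Lambda>"
proof -
  have nn: "(\<integral>\<^sup>+\<omega>. ennreal ((norm (\<Lambda> \<omega> f))\<^sup>2) \<partial>M) = ennreal (\<integral>\<omega>. (norm (\<Lambda> \<omega> f))\<^sup>2 \<partial>M)" for f
    using assms(2) by (intro nn_integral_eq_integral) (auto simp: cg_bessel_def)
  have meas: "\<forall>f. strongly_measurable M (\<lambda>\<omega>. \<Lambda> \<omega> f)"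
    and bound: "\<And>f. (\<integral>\<omega>. (norm (\<Lambda> \<omega> f))\<^sup>2 \<partial>M) \<le> B * (norm f)\<^sup>2"
    using assms(2) by (auto simp: cg_bessel_def)
  have upper: "(\<integral>\<omega>. (norm (\<Lambda> \<omega> f))\<^sup>2 \<partial>M) \<le> max B A * (norm f)\<^sup>2" for f
    using bound[of f] by (rule order.trans) (simp add: mult_right_mono)
  show ?thesis
    unfolding cg_frame_def nn using assms(1,3) meas
    by (intro conjI exI[of _ A] exI[of _ "max B A"] allI ennreal_leI lower upper) auto
qed

lemma integrable_cinner_bessel:
  assumes "cg_bessel M \<Lambda> B1" "cg_bessel M \<Theta> B2"
  shows "integrable M (\<lambda>\<omega>. cinner (\<Lambda> \<omega> f) (\<Theta> \<omega> g))"
proof (rule Bochner_Integration.integrable_bound)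
  show "integrable M (\<lambda>\<omega>. (norm (\<Lambda> \<omega> f))\<^sup>2 + (norm (\<Theta> \<omega> g))\<^sup>2)"
    using assms by (auto simp: cg_bessel_def)
  show "(\<lambda>\<omega>. cinner (\<Lambda> \<omega> f) (\<Theta> \<omega> g)) \<in> borel_measurable M"
    using assms by (intro borel_measurable_cinner_strongly) (auto simp: cg_bessel_def)
  have "norm (cinner (\<Lambda> \<omega> f) (\<Theta> \<omega> g)) \<le> (norm (\<Lambda> \<omega> f))\<^sup>2 + (norm (\<Theta> \<omega> g))\<^sup>2" for \<omega>
    using norm_cinner_le[of "\<Lambda> \<omega> f" "\<Theta> \<omega> g"] sum_squares_bound[of "norm (\<Lambda> \<omega> f)" "norm (\<Theta> \<omega> g)"]
      mult_nonneg_nonneg[OF norm_ge_zero norm_ge_zero, of "\<Lambda> \<omega> f" "\<Theta> \<omega> g"] by linarith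
  then show "AE \<omega> in M. norm (cinner (\<Lambda> \<omega> f) (\<Theta> \<omega> g))
      \<le> norm ((norm (\<Lambda> \<omega> f))\<^sup>2 + (norm (\<Theta> \<omega> g))\<^sup>2)"
    by simp
qed

lemma cg_bessel_sum_family:
  fixes \<Lambda> :: "'w \<Rightarrow> 'a::complex_inner \<Rightarrow> 'k::complex_inner" and \<Psi> :: "'w \<Rightarrow> 'b::complex_inner \<Rightarrow> 'k"
  assumes "cg_bessel M \<Lambda> B1" "cg_bessel M \<Psi> B2"
  shows "cg_bessel M (\<lambda>\<omega> p. \<Lambda> \<omega> (fst p) + \<Psi> \<omega> (snd p)) (2 * (B1 + B2))"
proof -
  have B: "0 < B1" "0 < B2" and meas: "\<And>f. strongly_measurable M (\<lambda>\<omega>. \<Lambda> \<omega> f)"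
      "\<And>g. strongly_measurable M (\<lambda>\<omega>. \<Psi> \<omega> g)"
    and int: "\<And>f. integrable M (\<lambda>\<omega>. (norm (\<Lambda> \<omega> f))\<^sup>2)" "\<And>g. integrable M (\<lambda>\<omega>. (norm (\<Psi> \<omega> g))\<^sup>2)"
    and bound: "\<And>f. (\<integral>\<omega>. (norm (\<Lambda> \<omega> f))\<^sup>2 \<partial>M) \<le> B1 * (norm f)\<^sup>2"
      "\<And>g. (\<integral>\<omega>. (norm (\<Psi> \<omega> g))\<^sup>2 \<partial>M) \<le> B2 * (norm g)\<^sup>2"
    using assms by (auto simp: cg_bessel_def)
  have pointwise: "(norm (a + b))\<^sup>2 \<le> 2 * (norm a)\<^sup>2 + 2 * (norm b)\<^sup>2" for a b :: 'k
    using power_mono[OF norm_triangle_ineq[of a b] norm_ge_zero, of 2] sum_squares_bound[of "norm a" "norm b"]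
    unfolding power2_sum by linarith
  have sum_meas: "strongly_measurable M (\<lambda>\<omega>. \<Lambda> \<omega> f + \<Psi> \<omega> g)" for f g
    by (intro strongly_measurable_add meas)
  have sum_int: "integrable M (\<lambda>\<omega>. (norm (\<Lambda> \<omega> f + \<Psi> \<omega> g))\<^sup>2)" for f g
  proof (rule Bochner_Integration.integrable_bound)
    show "integrable M (\<lambda>\<omega>. 2 * (norm (\<Lambda> \<omega> f))\<^sup>2 + 2 * (norm (\<Psi> \<omega> g))\<^sup>2)"
      by (simp add: int)
    show "(\<lambda>\<omega>. (norm (\<Lambda> \<omega> f + \<Psi> \<omega> g))\<^sup>2) \<in> borel_measurable M"
      by (intro borel_measurable_norm_power2_strongly sum_meas)
    show "AE \<omega> in M. norm ((norm (\<Lambda> \<omega> f + \<Psi> \<omega> g))\<^sup>2)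
        \<le> norm (2 * (norm (\<Lambda> \<omega> f))\<^sup>2 + 2 * (norm (\<Psi> \<omega> g))\<^sup>2)"
      by (intro AE_I2) (simp add: pointwise)
  qed
  have "(\<integral>\<omega>. (norm (\<Lambda> \<omega> f + \<Psi> \<omega> g))\<^sup>2 \<partial>M) \<le> 2 * (B1 + B2) * (norm (f, g))\<^sup>2" for f g
  proof -
    have "(\<integral>\<omega>. (norm (\<Lambda> \<omega> f + \<Psi> \<omega> g))\<^sup>2 \<partial>M)
        \<le> (\<integral>\<omega>. 2 * (norm (\<Lambda> \<omega> f))\<^sup>2 + 2 * (norm (\<Psi> \<omega> g))\<^sup>2 \<partial>M)"
      by (intro Bochner_Integration.integral_mono sum_int pointwise) (simp add: int)
    also have "\<dots> = 2 * (\<integral>\<omega>. (norm (\<Lambda> \<omega> f))\<^sup>2 \<partial>M) + 2 * (\<integral>\<omega>. (norm (\<Psi> \<omega> g))\<^sup>2 \<partial>M)"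
      using int(1)[of f] int(2)[of g] by simp
    also have "\<dots> \<le> 2 * (B1 * (norm f)\<^sup>2) + 2 * (B2 * (norm g)\<^sup>2)"
      using bound(1)[of f] bound(2)[of g] by linarith
    also have "\<dots> \<le> 2 * (B1 + B2) * (norm (f, g))\<^sup>2"
      using B by (simp add: norm_prod_def distrib_left distrib_right mult_left_mono)
    finally show ?thesis .
  qed
  then show ?thesis
    using B sum_meas sum_int by (auto simp: cg_bessel_def)
qed

section \<open>Lower frame bounds from duality\<close>

lemma integral_power2_lower_bound_AM_GM:
  fixes x y c :: "'w \<Rightarrow> real"
  assumes "integrable M (\<lambda>\<omega>. (x \<omega>)\<^sup>2)" "integrable M (\<lambda>\<omega>. (y \<omega>)\<^sup>2)" "integrable M c"
    and "\<And>\<omega>. c \<omega> \<le> x \<omega> * y \<omega>" "n \<le> integral\<^sup>L M c"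
    and "integral\<^sup>L M (\<lambda>\<omega>. (y \<omega>)\<^sup>2) \<le> B * n" "0 < B"
  shows "n / B \<le> integral\<^sup>L M (\<lambda>\<omega>. (x \<omega>)\<^sup>2)"
proof -
  have AM_GM: "x \<omega> * y \<omega> \<le> (B * (x \<omega>)\<^sup>2 + (y \<omega>)\<^sup>2 / B) / 2" for \<omega>
    using sum_squares_bound[of "B * x \<omega>" "y \<omega>"] \<open>0 < B\<close>
    by (simp add: field_simps power2_eq_square)
  have "n \<le> integral\<^sup>L M c" by fact
  also have "\<dots> \<le> integral\<^sup>L M (\<lambda>\<omega>. (B * (x \<omega>)\<^sup>2 + (y \<omega>)\<^sup>2 / B) / 2)"
    using assms(1-3) order.trans[OF assms(4) AM_GM] by (intro Bochner_Integration.integral_mono) auto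
  also have "\<dots> = (B * integral\<^sup>L M (\<lambda>\<omega>. (x \<omega>)\<^sup>2) + integral\<^sup>L M (\<lambda>\<omega>. (y \<omega>)\<^sup>2) / B) / 2"
    using assms(1,2) by simp
  also have "\<dots> \<le> (B * integral\<^sup>L M (\<lambda>\<omega>. (x \<omega>)\<^sup>2) + n) / 2"
    using assms(6,7) by (simp add: field_simps)
  finally show ?thesis using \<open>0 < B\<close> by (simp add: field_simps)
qed

lemma cg_dual_ofI_bessel:
  assumes "\<forall>\<omega>\<in>space M. bounded_clinear (\<Gamma> \<omega>) \<and> range (\<Gamma> \<omega>) \<subseteq> K \<omega>"
    and "\<forall>\<omega>\<in>space M. bounded_clinear (\<Delta> \<omega>) \<and> range (\<Delta> \<omega>) \<subseteq> K \<omega>"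
    and \<Gamma>: "cg_bessel M \<Gamma> B\<^sub>\<Gamma>" and \<Delta>: "cg_bessel M \<Delta> B\<^sub>\<Delta>"
    and dual: "\<And>p q. cinner p q = (\<integral>\<omega>. cinner (\<Gamma> \<omega> p) (\<Delta> \<omega> q) \<partial>M)"
  shows "cg_dual_of M K \<Gamma> \<Delta>"
proof -
  have B: "0 < B\<^sub>\<Gamma>" "0 < B\<^sub>\<Delta>"
    and int: "\<And>p. integrable M (\<lambda>\<omega>. (norm (\<Gamma> \<omega> p))\<^sup>2)" "\<And>p. integrable M (\<lambda>\<omega>. (norm (\<Delta> \<omega> p))\<^sup>2)"
    and bound: "\<And>p. (\<integral>\<omega>. (norm (\<Gamma> \<omega> p))\<^sup>2 \<partial>M) \<le> B\<^sub>\<Gamma> * (norm p)\<^sup>2"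
      "\<And>p. (\<integral>\<omega>. (norm (\<Delta> \<omega> p))\<^sup>2 \<partial>M) \<le> B\<^sub>\<Delta> * (norm p)\<^sup>2"
    using \<Gamma> \<Delta> by (auto simp: cg_bessel_def)
  have int_cinner: "integrable M (\<lambda>\<omega>. cmod (cinner (\<Gamma> \<omega> p) (\<Delta> \<omega> p)))" for p
    using integrable_cinner_bessel[OF \<Gamma> \<Delta>] by (rule integrable_norm)
  have norm_le: "(norm p)\<^sup>2 \<le> (\<integral>\<omega>. cmod (cinner (\<Gamma> \<omega> p) (\<Delta> \<omega> p)) \<partial>M)" for p
  proof -
    have "(norm p)\<^sup>2 = Re (\<integral>\<omega>. cinner (\<Gamma> \<omega> p) (\<Delta> \<omega> p) \<partial>M)"
      by (simp add: cinner_self_eq_norm_power2 flip: dual)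
    also have "\<dots> \<le> (\<integral>\<omega>. cmod (cinner (\<Gamma> \<omega> p) (\<Delta> \<omega> p)) \<partial>M)"
      by (rule order.trans[OF complex_Re_le_cmod integral_norm_bound])
    finally show ?thesis .
  qed
  have "(1 / B\<^sub>\<Delta>) * (norm p)\<^sup>2 \<le> (\<integral>\<omega>. (norm (\<Gamma> \<omega> p))\<^sup>2 \<partial>M)" for p
    using integral_power2_lower_bound_AM_GM[OF int(1) int(2) int_cinner _ norm_le bound(2) B(2)]
    by (simp add: norm_cinner_le)
  then have "cg_frame M K \<Gamma>"
    using B by (intro cg_frameI_bessel[OF assms(1) \<Gamma>, of "1 / B\<^sub>\<Delta>"]) auto
  moreover have "(1 / B\<^sub>\<Gamma>) * (norm p)\<^sup>2 \<le> (\<integral>\<omega>. (norm (\<Delta> \<omega> p))\<^sup>2 \<partial>M)" for p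
    using integral_power2_lower_bound_AM_GM[OF int(2) int(1) int_cinner _ norm_le bound(1) B(1)]
    by (simp add: norm_cinner_le mult.commute[of "norm (\<Delta> _ p)"])
  then have "cg_frame M K \<Delta>"
    using B by (intro cg_frameI_bessel[OF assms(2) \<Delta>, of "1 / B\<^sub>\<Gamma>"]) auto
  ultimately show ?thesis using dual by (simp add: cg_dual_of_def)
qed

lemma bounded_clinear_sum_family:
  assumes "closed_csubspace S"
    and "bounded_clinear L1 \<and> range L1 \<subseteq> S" "bounded_clinear L2 \<and> range L2 \<subseteq> S"
  shows "bounded_clinear (\<lambda>p. L1 (fst p) + L2 (snd p)) \<and> range (\<lambda>p. L1 (fst p) + L2 (snd p)) \<subseteq> S"
proof -
  have lin: "bounded_linear L1" "bounded_linear L2"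
    and hom: "\<And>c x. L1 (c *\<^sub>C x) = c *\<^sub>C L1 x" "\<And>c x. L2 (c *\<^sub>C x) = c *\<^sub>C L2 x"
    using assms(2,3) by (auto simp: bounded_clinear_def)
  have "bounded_linear (\<lambda>p. L1 (fst p) + L2 (snd p))"
    by (intro bounded_linear_add bounded_linear_compose[OF lin(1)] bounded_linear_compose[OF lin(2)]
        bounded_linear_fst bounded_linear_snd)
  then show ?thesis
    using assms by (auto simp: bounded_clinear_def closed_csubspace_def scaleC_prod_def hom scaleC_add_right)
qed

lemma dual_sum_family:
  assumes "cg_bessel M \<Lambda> B1" "cg_bessel M \<Theta> B2" "cg_bessel M \<Psi> B3" "cg_bessel M \<Phi> B4"
    and dual_\<Lambda>\<Theta>: "\<And>f g. cinner f g = (\<integral>\<omega>. cinner (\<Lambda> \<omega> f) (\<Theta> \<omega> g) \<partial>M)"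
    and dual_\<Psi>\<Phi>: "\<And>f g. cinner f g = (\<integral>\<omega>. cinner (\<Psi> \<omega> f) (\<Phi> \<omega> g) \<partial>M)"
    and disjoint_\<Lambda>\<Phi>: "\<And>f g. (\<integral>\<omega>. cinner (\<Lambda> \<omega> f) (\<Phi> \<omega> g) \<partial>M) = 0"
    and disjoint_\<Theta>\<Psi>: "\<And>f g. (\<integral>\<omega>. cinner (\<Theta> \<omega> f) (\<Psi> \<omega> g) \<partial>M) = 0"
  shows "cinner p q = (\<integral>\<omega>. cinner (\<Lambda> \<omega> (fst p) + \<Psi> \<omega> (snd p)) (\<Theta> \<omega> (fst q) + \<Phi> \<omega> (snd q)) \<partial>M)"
proof -
  have "cinner (\<Lambda> \<omega> (fst p) + \<Psi> \<omega> (snd p)) (\<Theta> \<omega> (fst q) + \<Phi> \<omega> (snd q)) =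
      (cinner (\<Lambda> \<omega> (fst p)) (\<Theta> \<omega> (fst q)) + cinner (\<Lambda> \<omega> (fst p)) (\<Phi> \<omega> (snd q))) +
      (cnj (cinner (\<Theta> \<omega> (fst q)) (\<Psi> \<omega> (snd p))) + cinner (\<Psi> \<omega> (snd p)) (\<Phi> \<omega> (snd q)))" for \<omega>
    by (simp add: cinner_add_left cinner_add_right cinner_commute[of "\<Psi> \<omega> (snd p)"])
  moreover note integrable_cinner_bessel[OF assms(1,2)] integrable_cinner_bessel[OF assms(1,4)]
    integrable_cinner_bessel[OF assms(2,3), THEN integrable_cnj] integrable_cinner_bessel[OF assms(3,4)]
  ultimately show ?thesis
    by (simp add: cinner_prod_def disjoint_\<Lambda>\<Phi> disjoint_\<Theta>\<Psi> flip: dual_\<Lambda>\<Theta> dual_\<Psi>\<Phi>)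
qed

theorem proposition2p9:
  fixes M :: "'w measure"
    and K :: "'w \<Rightarrow> 'k::chilbert_space set"
    and \<Theta> \<Lambda> :: "'w \<Rightarrow> 'h::chilbert_space \<Rightarrow> 'k"
    and \<Phi> \<Psi> :: "'w \<Rightarrow> 'j::chilbert_space \<Rightarrow> 'k"
  assumes "\<forall>\<omega>\<in>space M. closed_csubspace (K \<omega>)"
    and "cg_frame M K \<Theta>" and "cg_dual_of M K \<Lambda> \<Theta>"
    and "cg_frame M K \<Phi>" and "cg_dual_of M K \<Psi> \<Phi>"
    and "strongly_disjoint M K \<Lambda> \<Phi>"
    and "strongly_disjoint M K \<Theta> \<Psi>"
  shows "cg_frame M K (\<lambda>\<omega> p. \<Lambda> \<omega> (fst p) + \<Psi> \<omega> (snd p))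
       \<and> cg_frame M K (\<lambda>\<omega> p. \<Theta> \<omega> (fst p) + \<Phi> \<omega> (snd p))
       \<and> cg_dual_of M K (\<lambda>\<omega> p. \<Lambda> \<omega> (fst p) + \<Psi> \<omega> (snd p))
                       (\<lambda>\<omega> p. \<Theta> \<omega> (fst p) + \<Phi> \<omega> (snd p))"
proof -
  have frames: "cg_frame M K \<Lambda>" "cg_frame M K \<Theta>" "cg_frame M K \<Psi>" "cg_frame M K \<Phi>"
    using assms by (auto simp: cg_dual_of_def)
  obtain B1 B2 B3 B4 where bessel: "cg_bessel M \<Lambda> B1" "cg_bessel M \<Theta> B2"
      "cg_bessel M \<Psi> B3" "cg_bessel M \<Phi> B4"
    using frames by (meson cg_frame_imp_bessel)
  have "cinner p q = (\<integral>\<omega>. cinner (\<Lambda> \<omega> (fst p) + \<Psi> \<omega> (snd p)) (\<Theta> \<omega> (fst q) + \<Phi> \<omega> (snd q)) \<partial>M)"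
    for p q
    using assms(3,5,6,7) by (intro dual_sum_family[OF bessel])
      (auto simp: cg_dual_of_def strongly_disjoint_def)
  moreover have "\<forall>\<omega>\<in>space M. bounded_clinear (\<lambda>p. \<Lambda> \<omega> (fst p) + \<Psi> \<omega> (snd p))
      \<and> range (\<lambda>p. \<Lambda> \<omega> (fst p) + \<Psi> \<omega> (snd p)) \<subseteq> K \<omega>"
    using assms(1) frames unfolding cg_frame_def by (intro ballI bounded_clinear_sum_family) auto
  moreover have "\<forall>\<omega>\<in>space M. bounded_clinear (\<lambda>p. \<Theta> \<omega> (fst p) + \<Phi> \<omega> (snd p))
      \<and> range (\<lambda>p. \<Theta> \<omega> (fst p) + \<Phi> \<omega> (snd p)) \<subseteq> K \<omega>"
    using assms(1) frames unfolding cg_frame_def by (intro ballI bounded_clinear_sum_family) auto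
  moreover have "cg_bessel M (\<lambda>\<omega> p. \<Lambda> \<omega> (fst p) + \<Psi> \<omega> (snd p)) (2 * (B1 + B3))"
    by (rule cg_bessel_sum_family[OF bessel(1,3)])
  moreover have "cg_bessel M (\<lambda>\<omega> p. \<Theta> \<omega> (fst p) + \<Phi> \<omega> (snd p)) (2 * (B2 + B4))"
    by (rule cg_bessel_sum_family[OF bessel(2,4)])
  ultimately have "cg_dual_of M K (\<lambda>\<omega> p. \<Lambda> \<omega> (fst p) + \<Psi> \<omega> (snd p))
      (\<lambda>\<omega> p. \<Theta> \<omega> (fst p) + \<Phi> \<omega> (snd p))"
    by (intro cg_dual_ofI_bessel)
  then show ?thesis by (simp add: cg_dual_of_def)
qed

end
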